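(* For every integer $t\ge3$ and every $\epsilon>0$ there exists a positive integer $n$ with $\omega(n)=t$ such that $\dfrac{i(X_n)}{n/p_t}<\epsilon$, where $p_t$ is the largest prime divisor of $n$.
   Context: $X_n$ is the graph on $\{0,\dots,n-1\}$ with $a,b$ adjacent iff $\gcd(a-b,n)=1$. $i(G)$ is the minimum size of a maximal independent set; $\omega(n)$ is the number of distinct prime factors of $n$. *)

theory Defs
  imports Complex_Main "HOL-Computational_Algebra.Primes"
begin

text \<open>The unitary Cayley graph X_n: vertex set {0..<n}, with a, b adjacent iff
  gcd(a - b, n) = 1 (differences taken in the integers). Loops are excluded
  (a = b); this only matters for n = 1.\<close>

definition X_adj :: "nat \<Rightarrow> nat \<Rightarrow> nat \<Rightarrow> bool" where
  "X_adj n a b \<longleftrightarrow> a < n \<and> b < n \<and> a \<noteq> b \<and> gcd (int a - int b) (int n) = 1"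

definition X_indep :: "nat \<Rightarrow> nat set \<Rightarrow> bool" where
  "X_indep n S \<longleftrightarrow> S \<subseteq> {0..<n} \<and> (\<forall>a\<in>S. \<forall>b\<in>S. \<not> X_adj n a b)"

definition X_maximal_indep :: "nat \<Rightarrow> nat set \<Rightarrow> bool" where
  "X_maximal_indep n S \<longleftrightarrow> X_indep n S \<and>
     (\<forall>T. X_indep n T \<and> S \<subseteq> T \<longrightarrow> T = S)"

definition i_X :: "nat \<Rightarrow> nat" where
  "i_X n = Min (card ` {S. X_maximal_indep n S})"

end

theory Submission
  imports Defs "HOL-Computational_Algebra.Squarefree" "HOL-Number_Theory.Cong"
begin

text \<open>Take n to be a product of t distinct primes whose three largest, a < b < c, satisfy
  c \<le> 16 b. Primes b < c \<le> 16 b exist above any bound by Erd\H{o}s' counting argument: every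
  N' \<le> N is a squarefree number times a square, so N \<le> 2^\<pi>(N) \<surd>N, which fails for N = 16^m if
  all primes beyond some M were more than 16-fold apart.

  The vertices divisible by at least two of a, b, c are pairwise non-adjacent, as any two of them
  share one of these primes. They form a maximal independent set: a vertex y outside avoids two of
  the primes, say u and v, and the Chinese remainder theorem yields a multiple s of u v with
  y - s a unit modulo n. Hence i(X_n) \<le> n/(ab) + n/(ac) + n/(bc), and dividing by n/c leaves at
  most c/(ab) + 1/b + 1/a \<le> 18/a, which is below \<epsilon> once a is large.\<close>

lemma squarefree_eq_prod_prime_factors:
  assumes "squarefree (n::nat)" shows "n = \<Prod>(prime_factors n)"
proof -
  have "n \<noteq> 0" using assms by (metis not_squarefree_0)
  then have "n = (\<Prod>p \<in> prime_factors n. p ^ multiplicity p n)"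
    by (simp add: prod_prime_factors)
  also have "\<dots> = \<Prod>(prime_factors n)"
    using assms \<open>n \<noteq> 0\<close> by (intro prod.cong) (auto simp: squarefree_factorial_semiring')
  finally show ?thesis .
qed

lemma prime_factors_prod_primes:
  assumes "finite P" "\<forall>p\<in>P. prime (p::nat)"
  shows "prime_factors (\<Prod>P) = P"
proof -
  have "0 \<notin> P" using assms(2) by auto
  then show ?thesis
    using assms prime_factors_prod[of P "\<lambda>p. p"] by (simp add: prime_prime_factors)
qed

lemma le_two_power_prime_count_mult_sqrt:
  fixes N K :: nat
  assumes "N \<le> K\<^sup>2"
  shows "N \<le> 2 ^ card {p. prime p \<and> p \<le> N} * K"
proof -
  define f where "f n = (prime_factors (squarefree_part n), square_part n)" for n :: nat
  have "inj_on f {1..N}"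
  proof
    fix x y assume "f x = f y"
    then have "square_part x = square_part y" "squarefree_part x = squarefree_part y"
      using squarefree_eq_prod_prime_factors[of "squarefree_part x"]
        squarefree_eq_prod_prime_factors[of "squarefree_part y"] by (auto simp: f_def)
    then show "x = y" by (rule squarefree_decomposition_unique)
  qed
  moreover have "f n \<in> Pow {p. prime p \<and> p \<le> N} \<times> {1..K}" if n: "n \<in> {1..N}" for n
  proof -
    have "square_part n ^ 2 \<le> n" using n by (intro dvd_imp_le) auto
    then have "square_part n ^ 2 \<le> K\<^sup>2" using n assms by (meson atLeastAtMost_iff le_trans)
    then have "square_part n \<le> K" by (simp add: power2_le_iff_abs_le)
    moreover have "square_part n \<ge> 1" using n by (cases "square_part n") auto
    moreover have "p \<le> N" if "p \<in> prime_factors (squarefree_part n)" for p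
    proof -
      have "p dvd n" using that squarefree_decompose[of n] by (metis dvd_mult2 in_prime_factors_imp_dvd)
      then have "p \<le> n" using n by (intro dvd_imp_le) auto
      then show ?thesis using n by simp
    qed
    ultimately show ?thesis by (auto simp: f_def)
  qed
  ultimately have "card {1..N} \<le> card (Pow {p. prime p \<and> p \<le> N} \<times> {1..K})"
    by (intro card_inj_on_le image_subsetI) auto
  then show ?thesis by (simp add: card_cartesian_product card_Pow)
qed

lemma floor_log_less_floor_log:
  fixes B x y :: real
  assumes "B > 1" "x > 0" "B * x < y"
  shows "\<lfloor>log B x\<rfloor> < \<lfloor>log B y\<rfloor>"
proof -
  have "B * x > 0" using assms by simp
  then have "y > 0" using assms by linarith
  have "1 + log B x = log B (B * x)" using assms by (simp add: log_mult)
  also have "\<dots> < log B y" using assms \<open>B * x > 0\<close> \<open>y > 0\<close> by (subst log_less_cancel_iff) auto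
  finally show ?thesis by linarith
qed

lemma exists_prime_pair_ratio_le_16:
  "\<exists>b c. prime b \<and> prime c \<and> M < b \<and> b < c \<and> c \<le> 16 * (b::nat)"
proof (rule ccontr)
  assume "\<not> ?thesis"
  then have sparse: "16 * p < q" if "prime p" "prime q" "M < p" "p < q" for p q
    using that by (meson not_le)
  define m where "m = M + 3"
  define N :: nat where "N = 16 ^ m"
  define B where "B = {p. prime p \<and> M < p \<and> p \<le> N}"
  define g where "g p = \<lfloor>log 16 (real p)\<rfloor>" for p :: nat
  have "strict_mono_on B g"
  proof (rule strict_mono_onI)
    fix p q assume "p \<in> B" "q \<in> B" "p < q"
    then have "16 * real p < real q" "real p > 0"
      using sparse[of p q] by (auto simp: B_def prime_gt_0_nat simp flip: of_nat_less_iff)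
    then show "g p < g q" unfolding g_def by (intro floor_log_less_floor_log) auto
  qed
  then have "inj_on g B" by (rule strict_mono_on_imp_inj_on)
  moreover have "g ` B \<subseteq> {0..int m}"
  proof
    fix z assume "z \<in> g ` B"
    then obtain p where p: "p \<in> B" "z = g p" by auto
    then have "1 \<le> real p" "real p \<le> 16 powr real m"
      by (auto simp: B_def N_def powr_realpow prime_ge_1_nat simp flip: of_nat_power)
    then have "0 \<le> log 16 (real p)" "log 16 (real p) \<le> real m"
      by (auto simp: log_le_iff)
    then show "z \<in> {0..int m}" using p by (auto simp: g_def le_floor_iff floor_le_iff)
  qed
  ultimately have "card B \<le> m + 1" using card_inj_on_le[of g B "{0..int m}"] by simp
  have "{p. prime p \<and> p \<le> N} \<subseteq> {..M} \<union> B" by (auto simp: B_def)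
  then have "card {p. prime p \<and> p \<le> N} \<le> card ({..M} \<union> B)"
    by (intro card_mono) (auto simp: B_def)
  also have "\<dots> \<le> M + m + 2" using card_Un_le[of "{..M}" B] \<open>card B \<le> m + 1\<close> by simp
  finally have "card {p. prime p \<and> p \<le> N} \<le> M + m + 2" .
  have "N = (4 ^ m)\<^sup>2" by (simp add: N_def power2_eq_square flip: power_mult_distrib)
  then have "N \<le> 2 ^ card {p. prime p \<and> p \<le> N} * 4 ^ m"
    by (intro le_two_power_prime_count_mult_sqrt) simp
  also have "\<dots> \<le> 2 ^ (M + m + 2) * 4 ^ m"
    using \<open>card {p. prime p \<and> p \<le> N} \<le> M + m + 2\<close> by (intro mult_right_mono power_increasing) auto
  finally have "N \<le> 2 ^ (M + m + 2) * 4 ^ m" .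
  moreover have "N = 2 ^ (4 * m)" "(4::nat) ^ m = 2 ^ (2 * m)" by (simp_all add: N_def power_mult)
  ultimately have "(2::nat) ^ (4 * m) \<le> 2 ^ (M + m + 2 + 2 * m)" by (simp only: power_add)
  then show False unfolding m_def by simp
qed

lemma exists_multiple_coprime_diff:
  fixes P U :: "nat set"
  assumes fin: "finite P" and prime: "\<forall>p\<in>P. prime p" and "U \<subseteq> P"
    and not_dvd: "\<forall>u\<in>U. \<not> u dvd y"
  shows "\<exists>s < \<Prod>P. (\<forall>u\<in>U. u dvd s) \<and> coprime (int y - int s) (int (\<Prod>P))"
proof -
  \<comment> \<open>Off U we aim at s \<equiv> y + 1, so that y - s \<equiv> -1 is a unit there.\<close>
  define r where "r p = (if p \<in> U then 0 else y + 1)" for p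
  have "\<forall>p\<in>P. \<forall>q\<in>P. p \<noteq> q \<longrightarrow> coprime (id p) (id q)"
    using prime by (auto intro: primes_coprime)
  then obtain x where x: "\<forall>p\<in>P. [x = r p] (mod id p)"
    using chinese_remainder_nat[OF fin] by blast
  define s where "s = x mod \<Prod>P"
  have "[s = r p] (mod p)" if "p \<in> P" for p
    using x that fin by (auto simp: s_def cong_def mod_mod_cancel dvd_prod_eqI)
  then have s_mod: "[int s = int (r p)] (mod int p)" if "p \<in> P" for p
    using that by (simp add: cong_int_iff)
  have "\<not> int p dvd int y - int s" if p: "p \<in> P" for p
  proof (cases "p \<in> U")
    case True
    then have "int p dvd int s" using s_mod[OF p] by (simp add: r_def cong_0_iff)
    then show ?thesis using True not_dvd by (metis dvd_add_left_iff diff_add_cancel int_dvd_int_iff)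
  next
    case False
    then have "[int y - int s = - 1] (mod int p)"
      using s_mod[OF p] by (simp add: r_def cong_iff_dvd_diff) (smt (verit) dvd_minus_iff)
    then show ?thesis using prime p by (auto simp: cong_dvd_iff prime_gt_1_nat)
  qed
  then have "coprime (int y - int s) (\<Prod>p\<in>P. int p)"
    using prime by (intro prod_coprime_right, subst coprime_commute) (auto intro!: prime_imp_coprime)
  moreover have "s < \<Prod>P" using fin prime by (simp add: s_def prime_gt_0_nat prod_pos)
  moreover have "u dvd s" if "u \<in> U" for u
    using s_mod[of u] that \<open>U \<subseteq> P\<close> by (auto simp: r_def cong_0_iff)
  ultimately show ?thesis by auto
qed

lemma card_multiples_below:
  fixes d n :: nat
  assumes "d dvd n" "d > 0"
  shows "card {x. x < n \<and> d dvd x} = n div d"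
proof -
  have "{x. x < n \<and> d dvd x} = (*) d ` {..<n div d}"
    using assms by (auto simp: dvd_def)
  moreover have "inj_on ((*) d) {..<n div d}" using assms by (auto simp: inj_on_def)
  ultimately show ?thesis by (simp add: card_image)
qed

lemma i_X_le_card:
  assumes "X_maximal_indep n S"
  shows "i_X n \<le> card S"
proof -
  have "{S. X_maximal_indep n S} \<subseteq> Pow {0..<n}"
    by (auto simp: X_maximal_indep_def X_indep_def)
  then have "finite (card ` {S. X_maximal_indep n S})"
    by (meson finite_Pow_iff finite_atLeastLessThan finite_imageI finite_subset)
  then show ?thesis unfolding i_X_def using assms by (intro Min_le) auto
qed

lemma X_indep_if_common_prime_factor:
  assumes "S \<subseteq> {0..<n}"
    and "\<And>x y. x \<in> S \<Longrightarrow> y \<in> S \<Longrightarrow> \<exists>p. prime p \<and> p dvd n \<and> p dvd x \<and> p dvd y"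
  shows "X_indep n S"
proof -
  have "\<not> X_adj n x y" if "x \<in> S" "y \<in> S" for x y
  proof
    obtain p where "prime p" "p dvd n" "p dvd x" "p dvd y" using assms(2) \<open>x \<in> S\<close> \<open>y \<in> S\<close> by blast
    moreover assume "X_adj n x y"
    then have "gcd (int x - int y) (int n) = 1" by (simp add: X_adj_def)
    ultimately have "int p dvd 1" by (metis dvd_diff gcd_greatest int_dvd_int_iff)
    then show False using \<open>prime p\<close> by (simp add: prime_gt_1_nat)
  qed
  then show ?thesis using assms(1) by (auto simp: X_indep_def)
qed

lemma X_maximal_indepI:
  assumes "X_indep n S" and "\<And>y. y < n \<Longrightarrow> y \<notin> S \<Longrightarrow> \<exists>s\<in>S. X_adj n y s"
  shows "X_maximal_indep n S"
  unfolding X_maximal_indep_def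
proof (intro conjI allI impI assms(1))
  fix T assume T: "X_indep n T \<and> S \<subseteq> T"
  show "T = S"
  proof (rule ccontr)
    assume "T \<noteq> S"
    then obtain y where "y \<in> T" "y \<notin> S" using T by blast
    moreover from this have "y < n" using T by (auto simp: X_indep_def)
    ultimately obtain s where "s \<in> T" "X_adj n y s" using assms(2) T by blast
    then show False using T \<open>y \<in> T\<close> by (auto simp: X_indep_def)
  qed
qed

definition pair_multiples :: "nat \<Rightarrow> nat \<Rightarrow> nat \<Rightarrow> nat \<Rightarrow> nat set" where
  "pair_multiples n a b c = {x. x < n \<and> (a * b dvd x \<or> a * c dvd x \<or> b * c dvd x)}"

lemma card_pair_multiples_le:
  assumes "a * b dvd n" "a * c dvd n" "b * c dvd n" and "a > 0" "b > 0" "c > 0"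
  shows "card (pair_multiples n a b c) \<le> n div (a * b) + n div (a * c) + n div (b * c)"
proof -
  define M where "M d = {x. x < n \<and> d dvd x}" for d
  have "pair_multiples n a b c = M (a * b) \<union> M (a * c) \<union> M (b * c)"
    by (auto simp: pair_multiples_def M_def)
  then have "card (pair_multiples n a b c) \<le> card (M (a * b)) + card (M (a * c)) + card (M (b * c))"
    by (metis card_Un_le add_right_mono order.trans)
  also have "\<dots> = n div (a * b) + n div (a * c) + n div (b * c)"
    using assms by (simp add: M_def card_multiples_below)
  finally show ?thesis .
qed

lemma X_maximal_indep_pair_multiples:
  fixes P :: "nat set"
  assumes fin: "finite P" and prime: "\<forall>p\<in>P. prime p"
    and abc: "a \<in> P" "b \<in> P" "c \<in> P" and neq: "a \<noteq> b" "a \<noteq> c" "b \<noteq> c"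
  shows "X_maximal_indep (\<Prod>P) (pair_multiples (\<Prod>P) a b c)"
proof -
  define n where "n = \<Prod>P"
  define S where "S = pair_multiples n a b c"
  have dvd_n: "p dvd n" if "p \<in> P" for p
    using that fin by (simp add: n_def dvd_prod_eqI)
  have coprime_prod_dvd: "p * q dvd x \<longleftrightarrow> p dvd x \<and> q dvd x"
    if "p \<in> P" "q \<in> P" "p \<noteq> q" for p q x
    using that prime primes_coprime[of p q] by (auto intro: divides_mult dest: dvd_mult_left dvd_mult_right)
  have "X_indep n S"
  proof (rule X_indep_if_common_prime_factor)
    show "S \<subseteq> {0..<n}" by (auto simp: S_def pair_multiples_def)
    fix x y assume "x \<in> S" "y \<in> S"
    then have "\<exists>p\<in>{a, b, c}. p dvd x \<and> p dvd y"
      using abc neq by (auto simp: S_def pair_multiples_def coprime_prod_dvd)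
    then show "\<exists>p. prime p \<and> p dvd n \<and> p dvd x \<and> p dvd y"
      using abc prime dvd_n by blast
  qed
  moreover have "\<exists>s\<in>S. X_adj n y s" if "y < n" "y \<notin> S" for y
  proof -
    have "\<not> (a dvd y \<and> b dvd y)" "\<not> (a dvd y \<and> c dvd y)" "\<not> (b dvd y \<and> c dvd y)"
      using that abc neq by (auto simp: S_def pair_multiples_def coprime_prod_dvd)
    then obtain u v where uv: "u \<in> {a, b, c}" "v \<in> {a, b, c}" "u \<noteq> v" "\<not> u dvd y" "\<not> v dvd y"
      using neq by blast
    then obtain s where s: "s < n" "u dvd s" "v dvd s" "coprime (int y - int s) (int n)"
      using exists_multiple_coprime_diff[OF fin prime, of "{u, v}" y] abc by (auto simp: n_def)
    then have "s \<in> S"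
      using uv abc neq by (auto simp: S_def pair_multiples_def coprime_prod_dvd)
    moreover have "n \<noteq> 1" using dvd_n[OF abc(1)] prime abc(1) by (auto simp: prime_gt_1_nat)
    then have "y \<noteq> s" using s(4) by auto
    ultimately show ?thesis using s(1,4) \<open>y < n\<close> by (auto simp: X_adj_def)
  qed
  ultimately show ?thesis by (simp add: X_maximal_indepI n_def S_def)
qed

lemma i_X_prod_primes_ratio_le:
  fixes P :: "nat set"
  assumes fin: "finite P" and prime: "\<forall>p\<in>P. prime p" and abc: "a \<in> P" "b \<in> P" "c \<in> P"
    and order: "a < b" "b < c" "c \<le> 16 * b"
  shows "real (i_X (\<Prod>P)) / (real (\<Prod>P) / real c) \<le> 18 / real a"
proof -
  define n where "n = \<Prod>P"
  have pos: "a > 0" "b > 0" "c > 0" using prime abc by (auto simp: prime_gt_0_nat)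
  have "n > 0" using fin prime by (simp add: n_def prime_gt_0_nat prod_pos)
  have dvd_n: "p * q dvd n" if "p \<in> P" "q \<in> P" "p \<noteq> q" for p q
  proof -
    have "\<Prod>{p, q} dvd n" unfolding n_def using that fin by (intro prod_dvd_prod_subset) auto
    then show ?thesis using that by simp
  qed
  then have dvd: "a * b dvd n" "a * c dvd n" "b * c dvd n" using abc order by auto
  have "i_X n \<le> card (pair_multiples n a b c)"
    unfolding n_def using order by (intro i_X_le_card X_maximal_indep_pair_multiples fin prime abc) auto
  also have "\<dots> \<le> n div (a * b) + n div (a * c) + n div (b * c)"
    using dvd pos by (rule card_pair_multiples_le)
  finally have "real (i_X n) \<le> real (n div (a * b)) + real (n div (a * c)) + real (n div (b * c))"
    by (metis of_nat_add of_nat_le_iff)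
  also have "\<dots> = real n / (a * b) + real n / (a * c) + real n / (b * c)"
    using dvd by (simp add: real_of_nat_div)
  finally have "real (i_X n) \<le> real n / (a * b) + real n / (a * c) + real n / (b * c)" .
  then have "real (i_X n) / (real n / real c)
      \<le> (real n / (a * b) + real n / (a * c) + real n / (b * c)) / (real n / real c)"
    using \<open>n > 0\<close> pos by (intro divide_right_mono) auto
  also have "\<dots> = real c / (real a * real b) + 1 / real b + 1 / real a"
    using \<open>n > 0\<close> pos by (simp add: field_simps)
  also have "\<dots> \<le> 16 / real a + 1 / real a + 1 / real a"
  proof -
    have "real c / (real a * real b) \<le> 16 * real b / (real a * real b)"
      using order pos by (intro divide_right_mono) auto
    moreover have "1 / real b \<le> 1 / real a" using order pos by (intro divide_left_mono) auto
    ultimately show ?thesis using pos by simp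
  qed
  finally show ?thesis by (simp add: n_def)
qed

theorem corollary4p11:
  fixes t :: nat and \<epsilon> :: real
  assumes "t \<ge> 3" and "\<epsilon> > 0"
  shows "\<exists>n::nat. n > 0 \<and> card (prime_factors n) = t \<and>
           real (i_X n) / (real n / real (Max (prime_factors n))) < \<epsilon>"
proof -
  obtain Q where Q: "Q \<subseteq> {p::nat. prime p}" "finite Q" "card Q = t - 3"
    using infinite_arbitrarily_large[OF primes_infinite] by blast
  obtain a where a: "prime a" "a > Max (insert 0 Q)" "a > nat \<lceil>18 / \<epsilon>\<rceil>"
    using bigger_prime[of "max (Max (insert 0 Q)) (nat \<lceil>18 / \<epsilon>\<rceil>)"] by auto
  obtain b c where bc: "prime b" "prime c" "a < b" "b < c" "c \<le> 16 * b"
    using exists_prime_pair_ratio_le_16 by blast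
  have Q_less: "q < a" if "q \<in> Q" for q
    using Max_ge[of "insert 0 Q" q] Q(2) that a(2) by simp
  define P where "P = insert a (insert b (insert c Q))"
  have fin: "finite P" and prime: "\<forall>p\<in>P. prime p" using Q a bc by (auto simp: P_def)
  have "a \<notin> Q" "b \<notin> Q" "c \<notin> Q" using Q_less[of a] Q_less[of b] Q_less[of c] bc by auto
  then have "card P = t" using Q bc assms(1) by (simp add: P_def)
  have "Max P = c" using bc fin by (intro Max_eqI) (auto simp: P_def dest: Q_less)
  have "real (i_X (\<Prod>P)) / (real (\<Prod>P) / real c) \<le> 18 / real a"
    using bc by (intro i_X_prod_primes_ratio_le fin prime) (auto simp: P_def)
  also have "18 / real a < \<epsilon>"
  proof -
    have "18 / \<epsilon> < real a" using a(3) by linarith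
    then show ?thesis using assms(2) by (simp add: divide_less_eq mult.commute)
  qed
  finally have "real (i_X (\<Prod>P)) / (real (\<Prod>P) / real (Max P)) < \<epsilon>"
    using \<open>Max P = c\<close> by simp
  moreover have "\<Prod>P > 0" using fin prime by (simp add: prime_gt_0_nat prod_pos)
  ultimately show ?thesis
    using \<open>card P = t\<close> prime_factors_prod_primes[OF fin prime] by metis
qed

end
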